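(* Let $n\ge 3$, let $a_0,\ldots,a_{n-1}$ be indeterminates over $\mathbb{Q}$, $f=x^n+a_{n-1}x^{n-1}+\cdots+a_0$, and \[f_1(x,y)=\frac{f(y)-f(x)}{y-x},\qquad f_3(x,y)=\frac{f(y)-2f\left(\frac{x+y}{2}\right)+f(x)}{\frac{(y-x)^2}{2}}.\] Let $g_1(x,y)=f_1(x-y,x+y)$, $g_3(x,y)=f_3(x-y,x+y)$ and $G=\operatorname{res}(g_1,g_3,y)$. For each integer $m$ put $\varphi_m(x)=f^{(m)}(x)/m!$ if $1\le m\le n$ and $\varphi_m=0$ if $m\le0$ or $m>n$; let $M$ be the infinite matrix with entries $M_{2s-1,l}=\varphi_{2(l-s)+2}$, $M_{2s,l}=\varphi_{2(l-s)+1}$ ($s,l\ge1$) and $H$ its $(n-2)$th leading principal minor. Then $G=H^2$.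
   Context: $f^{(m)}$ is the $m$th derivative of $f$ with respect to $x$; $\operatorname{res}(\cdot,\cdot,y)$ is the Sylvester resultant with respect to $y$. *)

theory Defs
  imports "HOL-Library.Poly_Mapping" "Subresultants.Resultant_Prelim"
          "Jordan_Normal_Form.Determinant"
begin

(* Q[a_0, a_1, ...]: polynomials over Q in countably many indeterminates a_i *)
type_synonym qpoly = "(nat \<Rightarrow>\<^sub>0 nat) \<Rightarrow>\<^sub>0 rat"

definition ind :: "nat \<Rightarrow> qpoly" where
  "ind i = Poly_Mapping.single (Poly_Mapping.single i 1) 1"

definition rconst :: "rat \<Rightarrow> qpoly" where
  "rconst c = Poly_Mapping.single 0 c"

definition genpoly :: "nat \<Rightarrow> qpoly poly" where
  "genpoly n = monom 1 n + (\<Sum>i<n. monom (ind i) i)"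

(* Bivariate polynomials: type qpoly poly poly, outer variable y, inner variable x. *)
definition Xv :: "qpoly poly poly" where "Xv = [:[:0, 1:]:]"
definition Yv :: "qpoly poly poly" where "Yv = [:0, 1:]"

definition eval1 :: "qpoly poly \<Rightarrow> qpoly poly poly \<Rightarrow> qpoly poly poly" where
  "eval1 p A = poly (map_poly (\<lambda>c. [:[:c:]:]) p) A"

definition subst2 :: "qpoly poly poly \<Rightarrow> qpoly poly poly \<Rightarrow> qpoly poly poly \<Rightarrow> qpoly poly poly" where
  "subst2 P A B = poly (map_poly (\<lambda>p. eval1 p A) P) B"

definition phi :: "nat \<Rightarrow> qpoly poly \<Rightarrow> int \<Rightarrow> qpoly poly" where
  "phi n f m = (if 1 \<le> m \<and> m \<le> int n
     then smult (rconst (1 / of_nat (fact (nat m)))) ((pderiv ^^ nat m) f) else 0)"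

(* entries of the infinite matrix M, 1-indexed rows r and columns l *)
definition Mentry :: "nat \<Rightarrow> qpoly poly \<Rightarrow> nat \<Rightarrow> nat \<Rightarrow> qpoly poly" where
  "Mentry n f r l = (if odd r
     then phi n f (2 * (int l - int ((r + 1) div 2)) + 2)
     else phi n f (2 * (int l - int (r div 2)) + 1))"

definition Mlead :: "nat \<Rightarrow> qpoly poly \<Rightarrow> nat \<Rightarrow> qpoly poly mat" where
  "Mlead n f k = mat k k (\<lambda>(i, j). Mentry n f (i + 1) (j + 1))"

end

theory Submission
  imports Defs
begin

(* Write D^(k) f = f^(k)/k! (the Hasse derivative). By Taylor's formula
   g1(x,y) = (f(x+y) - f(x-y))/(2y) = \<Sum>_k D^(2k+1) f(x) y^(2k) and
   g3(x,y) = (f(x+y) - 2 f(x) + f(x-y))/(2y^2) = \<Sum>_k D^(2k+2) f(x) y^(2k),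
   so g1 = p1(y^2) and g3 = p3(y^2) for polynomials p1, p3 of degrees (n-1) div 2 and
   (n-2) div 2. Interleaving rows and columns splits the Sylvester matrix of p(y^2), q(y^2)
   into two diagonal blocks, each the Sylvester matrix of p, q; hence res(g1, g3) = res(p1, p3)^2.
   Finally, up to permutations of rows and columns the leading minor of M is the Sylvester
   matrix of p1 and p3, so its square is res(p1, p3)^2 as well. *)

interpretation rconst: comm_ring_hom rconst
  by unfold_locales (simp_all add: rconst_def single_add mult_single)

lemma eval1_pCons: "eval1 (pCons a p) A = [:[:a:]:] + A * eval1 p A"
  unfolding eval1_def by (cases "a = 0 \<and> p = 0") auto

interpretation eval1: comm_ring_hom "\<lambda>p. eval1 p A" for A
proof -
  interpret map_poly_comm_ring_hom "\<lambda>c::qpoly. [:[:c:]:]"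
    by unfold_locales auto
  show "comm_ring_hom (\<lambda>p. eval1 p A)"
    unfolding eval1_def by unfold_locales (simp_all add: hom_add hom_mult)
qed

lemma eval1_Xv: "eval1 p Xv = [:p:]"
  by (induct p) (simp_all add: eval1_pCons Xv_def)

interpretation subst2: comm_ring_hom "\<lambda>P. subst2 P A B" for A B
proof -
  interpret map_poly_comm_ring_hom "\<lambda>p. eval1 p A" ..
  show "comm_ring_hom (\<lambda>P. subst2 P A B)"
    unfolding subst2_def by unfold_locales (simp_all add: hom_add hom_mult)
qed

lemma subst2_Xv: "subst2 Xv A B = A"
  by (simp add: subst2_def Xv_def eval1_pCons flip: one_pCons)

lemma subst2_Yv: "subst2 Yv A B = B"
  by (simp add: subst2_def Yv_def)

lemma subst2_const: "subst2 [:[:c:]:] A B = [:[:c:]:]"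
  by (cases "c = 0") (simp_all add: subst2_def eval1_pCons)

lemma subst2_eval1: "subst2 (eval1 p P) A B = eval1 p (subst2 P A B)"
  by (induct p) (simp_all add: eval1_pCons subst2.hom_add subst2.hom_mult subst2_const)

section \<open>Hasse derivatives and Taylor expansion\<close>

definition hasse_deriv :: "nat \<Rightarrow> 'a::comm_semiring_1 poly \<Rightarrow> 'a poly" where
  "hasse_deriv k f = (\<Sum>d\<le>degree f. monom (of_nat ((d + k) choose k) * coeff f (d + k)) d)"

lemma coeff_hasse_deriv: "coeff (hasse_deriv k f) d = of_nat ((d + k) choose k) * coeff f (d + k)"
proof -
  have "coeff (hasse_deriv k f) d
      = (\<Sum>e\<le>degree f. if e = d then of_nat ((e + k) choose k) * coeff f (e + k) else 0)"
    unfolding hasse_deriv_def coeff_sum coeff_monom by (auto intro: sum.cong)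
  also have "\<dots> = of_nat ((d + k) choose k) * coeff f (d + k)"
    by (cases "d \<le> degree f") (auto simp: coeff_eq_0)
  finally show ?thesis .
qed

lemma hasse_deriv_0_left [simp]: "hasse_deriv 0 f = f"
  by (rule poly_eqI) (simp add: coeff_hasse_deriv)

lemma hasse_deriv_0_right [simp]: "hasse_deriv k 0 = 0"
  by (rule poly_eqI) (simp add: coeff_hasse_deriv)

lemma hasse_deriv_pCons:
  "hasse_deriv (Suc k) (pCons a f) = pCons 0 (hasse_deriv (Suc k) f) + hasse_deriv k f"
proof (rule poly_eqI)
  fix d
  show "coeff (hasse_deriv (Suc k) (pCons a f)) d
      = coeff (pCons 0 (hasse_deriv (Suc k) f) + hasse_deriv k f) d"
    by (cases d) (simp_all add: coeff_hasse_deriv algebra_simps)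
qed

lemma hasse_deriv_eq_0: "degree f < k \<Longrightarrow> hasse_deriv k f = 0"
  by (rule poly_eqI) (simp add: coeff_hasse_deriv coeff_eq_0)

lemma hasse_deriv_neq_0:
  fixes f :: "'a::{idom, ring_char_0} poly"
  assumes "f \<noteq> 0" "k \<le> degree f"
  shows "hasse_deriv k f \<noteq> 0"
proof
  assume "hasse_deriv k f = 0"
  then have "coeff (hasse_deriv k f) (degree f - k) = 0" by simp
  with assms show False by (simp add: coeff_hasse_deriv)
qed

lemma pochhammer_Suc_nat: "pochhammer (Suc d) m = fact m * ((d + m) choose m)"
proof -
  have "fact (d + m) = (fact d * pochhammer (Suc d) m :: nat)"
    using pochhammer_product'[of "1::nat" d m] by (simp add: pochhammer_fact)
  moreover have "fact m * fact d * ((d + m) choose m) = (fact (d + m) :: nat)"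
    using binomial_fact_lemma[of m "d + m"] by simp
  ultimately show ?thesis by (simp add: ac_simps)
qed

lemma higher_pderiv_eq_hasse_deriv:
  "(pderiv ^^ k) f = smult (of_nat (fact k)) (hasse_deriv k f)"
  by (rule poly_eqI)
    (simp only: coeff_higher_pderiv coeff_smult coeff_hasse_deriv pochhammer_of_nat
      pochhammer_Suc_nat of_nat_mult mult.assoc)

(* [:[:0, 1:], [:c:]:] is x + c y, so this is Taylor's formula
   f(x + c y) = \<Sum>_k c^k D^(k) f(x) y^k. *)

lemma coeff_eval1_shift: "coeff (eval1 f [:[:0, 1:], [:c:]:]) k = smult (c ^ k) (hasse_deriv k f)"
proof (induct f arbitrary: k)
  case (pCons a f)
  then show ?case
    by (cases k) (simp_all add: eval1_pCons hasse_deriv_pCons algebra_simps smult_add_right)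
qed simp

lemma Xv_plus_Yv: "Xv + Yv = [:[:0, 1:], [:1:]:]"
  and Xv_minus_Yv: "Xv - Yv = [:[:0, 1:], [:-1:]:]"
  by (simp_all add: Xv_def Yv_def one_pCons)

lemma coeff_eval1_odd_part:
  "coeff (eval1 f (Xv + Yv) - eval1 f (Xv - Yv)) k = (if odd k then 2 * hasse_deriv k f else 0)"
proof -
  have "coeff (eval1 f (Xv + Yv) - eval1 f (Xv - Yv)) k
      = hasse_deriv k f - smult ((-1) ^ k) (hasse_deriv k f)"
    by (simp only: Xv_plus_Yv Xv_minus_Yv coeff_diff coeff_eval1_shift power_one smult_1_left)
  also have "(-1 :: qpoly) ^ k = (if odd k then -1 else 1)"
    by simp
  finally show ?thesis
    by (simp flip: mult_2)
qed

lemma coeff_eval1_even_part: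
  "coeff (eval1 f (Xv + Yv) + eval1 f (Xv - Yv)) k = (if even k then 2 * hasse_deriv k f else 0)"
proof -
  have "coeff (eval1 f (Xv + Yv) + eval1 f (Xv - Yv)) k
      = hasse_deriv k f + smult ((-1) ^ k) (hasse_deriv k f)"
    by (simp only: Xv_plus_Yv Xv_minus_Yv coeff_add coeff_eval1_shift power_one smult_1_left)
  also have "(-1 :: qpoly) ^ k = (if odd k then -1 else 1)"
    by simp
  finally show ?thesis
    by (simp flip: mult_2)
qed

lemma coeff_pcompose_x2:
  fixes p :: "'a::comm_semiring_1 poly"
  shows "coeff (p \<circ>\<^sub>p monom 1 2) i = (if even i then coeff p (i div 2) else 0)"
proof (induct p arbitrary: i)
  case (pCons a p)
  then show ?case
    by (cases i) (auto simp: pcompose_pCons coeff_monom_mult coeff_pCons elim!: oddE)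
qed simp

definition hasse_poly2 :: "nat \<Rightarrow> 'a::comm_semiring_1 poly \<Rightarrow> 'a poly poly" where
  "hasse_poly2 r f = (\<Sum>k\<le>degree f. monom (hasse_deriv (2 * k + r) f) k)"

lemma coeff_hasse_poly2: "coeff (hasse_poly2 r f) k = hasse_deriv (2 * k + r) f"
proof -
  have "coeff (hasse_poly2 r f) k = (if k \<le> degree f then hasse_deriv (2 * k + r) f else 0)"
    unfolding hasse_poly2_def coeff_sum coeff_monom by (auto intro: sum.cong)
  then show ?thesis by (auto simp: hasse_deriv_eq_0)
qed

lemma degree_hasse_poly2:
  fixes f :: "'a::{idom, ring_char_0} poly"
  assumes "f \<noteq> 0" "r \<le> degree f"
  shows "degree (hasse_poly2 r f) = (degree f - r) div 2"
proof (rule antisym)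
  show "degree (hasse_poly2 r f) \<le> (degree f - r) div 2"
    by (rule degree_le) (auto simp: coeff_hasse_poly2 intro!: hasse_deriv_eq_0)
  have "hasse_deriv (2 * ((degree f - r) div 2) + r) f \<noteq> 0"
    using assms by (intro hasse_deriv_neq_0) auto
  then show "(degree f - r) div 2 \<le> degree (hasse_poly2 r f)"
    by (intro le_degree) (simp add: coeff_hasse_poly2)
qed

lemma Yv_mult: "Yv * P = pCons 0 P"
  unfolding Yv_def by simp

lemma subst2_smult: "subst2 (smult [:c:] P) A B = smult [:c:] (subst2 P A B)"
  using subst2.hom_mult[of "[:[:c:]:]" P A B] by (simp add: subst2_const)

lemma half_sum: "smult [:rconst (1/2):] ((Xv - Yv) + (Xv + Yv)) = Xv"
proof -
  have "[:rconst (1/2):] * 2 = (1 :: qpoly poly)"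
    by (simp add: numeral_poly flip: rconst.hom_numeral rconst.hom_mult)
  moreover have "(Xv - Yv) + (Xv + Yv) = smult 2 Xv"
    by (simp add: numeral_mult_conv_smult flip: mult_2)
  ultimately show ?thesis
    by simp
qed

lemma Xv_plus_minus_Yv: "(Xv + Yv) - (Xv - Yv) = Yv + Yv"
  by simp

lemma subst2_divided_difference:
  assumes "(Yv - Xv) * f1 = eval1 f Yv - eval1 f Xv"
  shows "subst2 f1 (Xv - Yv) (Xv + Yv) = hasse_poly2 1 f \<circ>\<^sub>p monom 1 2"
proof (rule poly_eqI)
  fix i
  let ?g = "subst2 f1 (Xv - Yv) (Xv + Yv)"
  have "((Xv + Yv) - (Xv - Yv)) * ?g = eval1 f (Xv + Yv) - eval1 f (Xv - Yv)"
    using arg_cong[OF assms, of "\<lambda>P. subst2 P (Xv - Yv) (Xv + Yv)"]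
    by (simp only: subst2.hom_mult subst2.hom_minus subst2_eval1 subst2_Xv subst2_Yv)
  then have "pCons 0 ?g + pCons 0 ?g = eval1 f (Xv + Yv) - eval1 f (Xv - Yv)"
    by (simp only: Xv_plus_minus_Yv distrib_right Yv_mult)
  from arg_cong[OF this, of "\<lambda>P. coeff P (Suc i)"]
  have "coeff ?g i + coeff ?g i = (if even i then 2 * hasse_deriv (Suc i) f else 0)"
    by (simp only: coeff_add coeff_pCons_Suc coeff_eval1_odd_part even_Suc not_not)
  then show "coeff ?g i = coeff (hasse_poly2 1 f \<circ>\<^sub>p monom 1 2) i"
    by (auto simp: coeff_pcompose_x2 coeff_hasse_poly2 simp flip: mult_2)
qed

lemma subst2_second_difference:
  assumes "(Yv - Xv)^2 * f3 =
           2 * (eval1 f Yv - 2 * eval1 f (smult [:rconst (1/2):] (Xv + Yv)) + eval1 f Xv)"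
  shows "subst2 f3 (Xv - Yv) (Xv + Yv) = hasse_poly2 2 f \<circ>\<^sub>p monom 1 2"
proof (rule poly_eqI)
  fix i
  let ?g = "subst2 f3 (Xv - Yv) (Xv + Yv)"
  have "pCons 0 (pCons 0 (smult 4 ?g)) = (Yv + Yv)^2 * ?g"
    by (simp add: Yv_def power2_eq_square algebra_simps)
  also have "\<dots> = 2 * (eval1 f (Xv + Yv) - 2 * eval1 f Xv + eval1 f (Xv - Yv))"
    using arg_cong[OF assms, of "\<lambda>P. subst2 P (Xv - Yv) (Xv + Yv)"]
    by (simp only: subst2.hom_mult subst2.hom_minus subst2.hom_add subst2.hom_power
        subst2.hom_numeral subst2_eval1 subst2_Xv subst2_Yv subst2_smult half_sum
        Xv_plus_minus_Yv)
  finally have "pCons 0 (pCons 0 (smult 4 ?g))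
      = 2 * (eval1 f (Xv + Yv) - 2 * eval1 f Xv + eval1 f (Xv - Yv))" .
  from arg_cong[OF this, of "\<lambda>P. coeff P (Suc (Suc i))"]
  have "4 * coeff ?g i = 2 * coeff (eval1 f (Xv + Yv) + eval1 f (Xv - Yv)) (Suc (Suc i))"
    by (simp only: coeff_pCons_Suc coeff_smult numeral_mult_conv_smult coeff_add coeff_diff
        eval1_Xv coeff_0 mult_zero_right diff_zero)
  also have "\<dots> = (if even i then 4 * hasse_deriv (Suc (Suc i)) f else 0)"
    by (simp only: coeff_eval1_even_part even_Suc not_not) simp
  finally show "coeff ?g i = coeff (hasse_poly2 2 f \<circ>\<^sub>p monom 1 2) i"
    by (auto simp: coeff_pcompose_x2 coeff_hasse_poly2)
qed

section \<open>Resultants of polynomials in \<open>x\<^sup>2\<close>\<close>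

lemma det_permute_rows_cols:
  assumes A: "A \<in> carrier_mat n n" and p: "p permutes {0..<n}" and q: "q permutes {0..<n}"
  shows "det (mat n n (\<lambda>(i, j). A $$ (p i, q j))) = signof p * signof q * det A"
proof -
  let ?B = "mat n n (\<lambda>(i, j). A $$ (p i, j))"
  have q_lt: "i < n \<Longrightarrow> q i < n" for i
    using permutes_in_image[OF q, of i] by auto
  have "transpose_mat (mat n n (\<lambda>(i, j). A $$ (p i, q j)))
      = mat n n (\<lambda>(i, j). transpose_mat ?B $$ (q i, j))"
    by (rule eq_matI) (auto simp: q_lt)
  then have "det (mat n n (\<lambda>(i, j). A $$ (p i, q j))) = signof q * det (transpose_mat ?B)"
    by (metis det_transpose det_permute_rows[OF _ q] mat_carrier transpose_carrier_mat)
  also have "det (transpose_mat ?B) = signof p * det A"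
    by (simp add: det_transpose[OF mat_carrier] det_permute_rows[OF A p])
  finally show ?thesis
    by (simp add: ac_simps)
qed

lemma signof_mult_self: "(signof p :: 'a::ring_1) * signof p = 1"
  by (simp add: sign_def)

lemma det_permute_rows_cols_square:
  assumes "A \<in> carrier_mat n n" "p permutes {0..<n}" "q permutes {0..<n}"
  shows "det (mat n n (\<lambda>(i, j). A $$ (p i, q j)))^2 = (det A)^2"
  by (simp add: det_permute_rows_cols[OF assms] power2_eq_square algebra_simps signof_mult_self)

definition interleave :: "nat \<Rightarrow> nat \<Rightarrow> nat" where
  "interleave N t = (if t < N then 2 * t else if t < 2 * N then 2 * (t - N) + 1 else t)"

lemma interleave_permutes: "interleave N permutes {0..<2 * N}"
proof (rule bij_imp_permutes)
  have inj: "inj_on (interleave N) {0..<2 * N}"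
    unfolding inj_on_def interleave_def by (auto split: if_splits) presburger+
  moreover have "interleave N ` {0..<2 * N} \<subseteq> {0..<2 * N}"
    by (auto simp: interleave_def)
  ultimately show "bij_betw (interleave N) {0..<2 * N} {0..<2 * N}"
    by (simp add: bij_betw_def endo_inj_surj)
qed (simp add: interleave_def)

lemma sylvester_mat_pcompose_x2:
  fixes p q :: "'a::idom poly"
  assumes i: "i < 2 * (degree p + degree q)" and j: "j < 2 * (degree p + degree q)"
  shows "sylvester_mat (p \<circ>\<^sub>p monom 1 2) (q \<circ>\<^sub>p monom 1 2) $$ (i, j)
    = (if even i = even j then sylvester_mat p q $$ (i div 2, j div 2) else 0)"
proof -
  define a b k l where "a = degree p" and "b = degree q" and "k = i div 2" and "l = j div 2"
  have degs: "degree (p \<circ>\<^sub>p monom 1 2) = 2 * a" "degree (q \<circ>\<^sub>p monom 1 2) = 2 * b"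
    by (simp_all add: degree_pcompose degree_monom_eq a_def b_def)
  have ij: "i < 2 * a + 2 * b" "j < 2 * a + 2 * b"
    using i j by (simp_all add: a_def b_def)
  have lhs: "sylvester_mat (p \<circ>\<^sub>p monom 1 2) (q \<circ>\<^sub>p monom 1 2) $$ (i, j) =
    (if i < 2 * b then
       if i \<le> j \<and> j - i \<le> 2 * a then coeff (p \<circ>\<^sub>p monom 1 2) (2 * a + i - j) else 0
     else if i - 2 * b \<le> j \<and> j \<le> i then coeff (q \<circ>\<^sub>p monom 1 2) (i - j) else 0)"
    by (rule sylvester_index_mat[of i "p \<circ>\<^sub>p monom 1 2" "q \<circ>\<^sub>p monom 1 2" j,
          unfolded degs, OF ij])
  have rhs: "sylvester_mat p q $$ (k, l) =
    (if k < b then if k \<le> l \<and> l - k \<le> a then coeff p (a + k - l) else 0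
     else if k - b \<le> l \<and> l \<le> k then coeff q (k - l) else 0)"
    using sylvester_index_mat[of k p q l] i j by (simp add: a_def b_def k_def l_def)
  have ik: "i = 2 * k + i mod 2" "j = 2 * l + j mod 2"
    by (simp_all add: k_def l_def)
  show ?thesis
  proof (cases "even i = even j")
    case True
    then have "i mod 2 = j mod 2" by presburger
    with ik have c1: "(i < 2 * b) = (k < b)"
      and c2: "(i \<le> j \<and> j - i \<le> 2 * a) = (k \<le> l \<and> l - k \<le> a)"
      and c3: "(i - 2 * b \<le> j \<and> j \<le> i) = (k - b \<le> l \<and> l \<le> k)"
      and c4: "k \<le> l \<Longrightarrow> l - k \<le> a \<Longrightarrow> 2 * a + i - j = 2 * (a + k - l)"
      and c5: "l \<le> k \<Longrightarrow> i - j = 2 * (k - l)"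
      by arith+
    show ?thesis
      unfolding lhs k_def[symmetric] l_def[symmetric] rhs c1 c2 c3
      using True by (auto simp: c4 c5 coeff_pcompose_x2)
  next
    case False
    have "i \<le> j \<Longrightarrow> j - i \<le> 2 * a \<Longrightarrow> odd (2 * a + i - j)"
      using False by presburger
    moreover have "j \<le> i \<Longrightarrow> odd (i - j)"
      using False by presburger
    ultimately show ?thesis
      unfolding lhs using False by (auto simp: coeff_pcompose_x2)
  qed
qed

lemma resultant_pcompose_x2:
  fixes p q :: "'a::idom poly"
  shows "resultant (p \<circ>\<^sub>p monom 1 2) (q \<circ>\<^sub>p monom 1 2) = (resultant p q)^2"
proof -
  define N where "N = degree p + degree q"
  let ?S = "sylvester_mat p q"
  let ?S2 = "sylvester_mat (p \<circ>\<^sub>p monom 1 2) (q \<circ>\<^sub>p monom 1 2)"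
  have S: "?S \<in> carrier_mat N N"
    unfolding N_def by (rule sylvester_carrier_mat)
  have S2: "?S2 \<in> carrier_mat (2 * N) (2 * N)"
    using sylvester_carrier_mat[of "p \<circ>\<^sub>p monom 1 2" "q \<circ>\<^sub>p monom 1 2"]
    by (simp add: N_def degree_pcompose degree_monom_eq algebra_simps)
  have interleave_lt: "t < 2 * N \<Longrightarrow> interleave N t < 2 * N" for t
    by (auto simp: interleave_def)
  have "mat (2 * N) (2 * N) (\<lambda>(u, v). ?S2 $$ (interleave N u, interleave N v))
      = four_block_mat ?S (0\<^sub>m N N) (0\<^sub>m N N) ?S"
    by (rule eq_matI)
      (use S in \<open>auto simp: sylvester_mat_pcompose_x2 interleave_lt[unfolded N_def]
        N_def interleave_def\<close>)
  then have "det ?S2 = det ?S * det ?S"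
    using det_permute_rows_cols[OF S2 interleave_permutes interleave_permutes]
      det_four_block_mat_upper_right_zero[OF S refl _ S]
    by (simp add: signof_mult_self)
  then show ?thesis
    by (simp add: resultant_def power2_eq_square)
qed

section \<open>Hurwitz-type matrices\<close>

definition hurwitz_mat :: "nat \<Rightarrow> 'a::zero poly \<Rightarrow> 'a poly \<Rightarrow> 'a mat" where
  "hurwitz_mat K p q = mat K K (\<lambda>(i, j).
     if i div 2 \<le> j then coeff (if even i then q else p) (j - i div 2) else 0)"

definition rev_perm :: "nat \<Rightarrow> nat \<Rightarrow> nat" where
  "rev_perm K j = (if j < K then K - 1 - j else j)"

(* Even rows of a Hurwitz matrix are the q-rows of the Sylvester matrix and odd rows its p-rows,
   both taken bottom-up; the columns are reversed. *)
definition hurwitz_row_perm :: "nat \<Rightarrow> nat \<Rightarrow> nat \<Rightarrow> nat" where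
  "hurwitz_row_perm K b i =
     (if i < K then if even i then K - 1 - i div 2 else b - 1 - i div 2 else i)"

lemma rev_perm_permutes: "rev_perm K permutes {0..<K}"
proof (rule bij_imp_permutes)
  have "inj_on (rev_perm K) {0..<K}"
    by (auto simp: inj_on_def rev_perm_def)
  moreover have "rev_perm K ` {0..<K} \<subseteq> {0..<K}"
    by (auto simp: rev_perm_def)
  ultimately show "bij_betw (rev_perm K) {0..<K} {0..<K}"
    by (simp add: bij_betw_def endo_inj_surj)
qed (simp add: rev_perm_def)

lemma hurwitz_row_perm_permutes:
  assumes "b \<le> a" "a \<le> b + 1"
  shows "hurwitz_row_perm (a + b) b permutes {0..<a + b}"
proof (rule bij_imp_permutes)
  let ?K = "a + b"
  have "inj_on (hurwitz_row_perm ?K b) {0..<?K}"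
  proof (rule inj_onI)
    fix x y
    assume x: "x \<in> {0..<?K}" and y: "y \<in> {0..<?K}"
      and eq: "hurwitz_row_perm ?K b x = hurwitz_row_perm ?K b y"
    have "odd x \<Longrightarrow> x div 2 < b" "odd y \<Longrightarrow> y div 2 < b"
      "even x \<Longrightarrow> x div 2 < a" "even y \<Longrightarrow> y div 2 < a"
      using x y assms by (simp_all; presburger)+
    with eq x y have "x div 2 = y div 2" "even x = even y"
      by (auto simp: hurwitz_row_perm_def split: if_splits)
    then show "x = y"
      by (metis div_mult_mod_eq even_iff_mod_2_eq_zero odd_iff_mod_2_eq_one)
  qed
  moreover have "hurwitz_row_perm ?K b ` {0..<?K} \<subseteq> {0..<?K}"
    using assms by (auto simp: hurwitz_row_perm_def)
  ultimately show "bij_betw (hurwitz_row_perm ?K b) {0..<?K} {0..<?K}"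
    by (simp add: bij_betw_def endo_inj_surj)
qed (simp add: hurwitz_row_perm_def)

lemma hurwitz_mat_eq_permuted_sylvester_mat:
  assumes "degree q \<le> degree p" "degree p \<le> degree q + 1"
  defines "K \<equiv> degree p + degree q"
  shows "hurwitz_mat K p q =
    mat K K (\<lambda>(i, j). sylvester_mat p q $$ (hurwitz_row_perm K (degree q) i, rev_perm K j))"
    (is "_ = ?R")
proof (rule eq_matI)
  fix i j
  assume "i < dim_row ?R" and "j < dim_col ?R"
  then have i: "i < K" and j: "j < K" by simp_all
  define a b t where "a = degree p" and "b = degree q" and "t = i div 2"
  have rows: "hurwitz_row_perm K b i < K" and cols: "rev_perm K j = K - 1 - j" "K - 1 - j < K"
    using i j assms unfolding hurwitz_row_perm_def rev_perm_def K_def a_def b_def by auto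
  have S: "sylvester_mat p q $$ (hurwitz_row_perm K b i, K - 1 - j) =
    (if hurwitz_row_perm K b i < b then
       if hurwitz_row_perm K b i \<le> K - 1 - j \<and> K - 1 - j - hurwitz_row_perm K b i \<le> a
       then coeff p (a + hurwitz_row_perm K b i - (K - 1 - j)) else 0
     else if hurwitz_row_perm K b i - b \<le> K - 1 - j \<and> K - 1 - j \<le> hurwitz_row_perm K b i
     then coeff q (hurwitz_row_perm K b i - (K - 1 - j)) else 0)"
    using sylvester_index_mat[of _ p q] rows cols unfolding K_def a_def b_def by simp
  have "hurwitz_mat K p q $$ (i, j) = (if t \<le> j then coeff (if even i then q else p) (j - t) else 0)"
    using i j by (simp add: hurwitz_mat_def t_def)
  also have "\<dots> = sylvester_mat p q $$ (hurwitz_row_perm K b i, K - 1 - j)"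
  proof (cases "even i")
    case True
    then have "t < a" "hurwitz_row_perm K b i = K - 1 - t"
      using i assms unfolding t_def a_def b_def K_def hurwitz_row_perm_def by auto
    then show ?thesis
      unfolding S using True j assms
      by (auto simp: K_def a_def b_def coeff_eq_0)
  next
    case False
    have "t < b"
      using False i assms unfolding t_def a_def b_def K_def by presburger
    moreover have "hurwitz_row_perm K b i = b - 1 - t"
      using False i unfolding t_def hurwitz_row_perm_def by simp
    ultimately show ?thesis
      unfolding S using False j assms
      by (auto simp: K_def a_def b_def coeff_eq_0)
  qed
  finally show "hurwitz_mat K p q $$ (i, j) = ?R $$ (i, j)"
    using i j by (simp add: cols b_def)
qed (simp_all add: hurwitz_mat_def)

lemma det_hurwitz_mat_square:
  assumes "degree q \<le> degree p" "degree p \<le> degree q + 1"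
  shows "det (hurwitz_mat (degree p + degree q) p q)^2 = (resultant p q)^2"
  unfolding hurwitz_mat_eq_permuted_sylvester_mat[OF assms] resultant_def
  by (rule det_permute_rows_cols_square[OF sylvester_carrier_mat
        hurwitz_row_perm_permutes[OF assms] rev_perm_permutes])

section \<open>The matrix \<open>M\<close>\<close>

lemma phi_eq_hasse_deriv:
  assumes "degree f \<le> n"
  shows "phi n f m = (if 1 \<le> m then hasse_deriv (nat m) f else 0)"
proof (cases "1 \<le> m \<and> m \<le> int n")
  case True
  have "rconst (1 / of_nat (fact (nat m))) * of_nat (fact (nat m)) = 1"
    by (simp flip: rconst.hom_of_nat rconst.hom_mult)
  with True show ?thesis
    by (simp add: phi_def higher_pderiv_eq_hasse_deriv)
next
  case False
  with assms show ?thesis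
    by (auto simp: phi_def intro!: hasse_deriv_eq_0)
qed

lemma Mentry_eq_coeff_hasse_poly2:
  assumes "degree f \<le> n"
  shows "Mentry n f (Suc i) (Suc j) =
    (if i div 2 \<le> j then coeff (hasse_poly2 (if even i then 2 else 1) f) (j - i div 2) else 0)"
proof -
  define t where "t = i div 2"
  have row: "(if odd (Suc i) then (Suc i + 1) div 2 else Suc i div 2) = Suc t"
    by (auto simp: t_def elim!: evenE oddE)
  show ?thesis
  proof (cases "t \<le> j")
    case True
    then obtain d where "j = t + d"
      using le_Suc_ex by blast
    moreover have "nat (2 * int d + 2) = 2 * d + 2" "nat (2 * int d + 1) = 2 * d + 1"
      by simp_all
    ultimately show ?thesis
      using row by (simp add: Mentry_def phi_eq_hasse_deriv[OF assms] coeff_hasse_poly2 t_def)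
  next
    case False
    then show ?thesis
      using row by (simp add: Mentry_def phi_eq_hasse_deriv[OF assms] t_def)
  qed
qed

lemma Mlead_eq_hurwitz_mat:
  assumes "degree f \<le> n"
  shows "Mlead n f K = hurwitz_mat K (hasse_poly2 1 f) (hasse_poly2 2 f)"
  by (rule eq_matI)
    (auto simp: Mlead_def hurwitz_mat_def Mentry_eq_coeff_hasse_poly2[OF assms])

lemma coeff_genpoly: "coeff (genpoly n) i = (if i = n then 1 else if i < n then ind i else 0)"
proof -
  have "coeff (\<Sum>j<n. monom (ind j) j) i = (if i < n then ind i else 0)"
    by (simp add: coeff_sum coeff_monom)
  then show ?thesis
    by (simp add: genpoly_def coeff_monom)
qed

lemma degree_genpoly: "degree (genpoly n) = n"
proof (rule antisym)
  show "degree (genpoly n) \<le> n"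
    by (rule degree_le) (simp add: coeff_genpoly)
  show "n \<le> degree (genpoly n)"
    by (rule le_degree) (simp add: coeff_genpoly)
qed

theorem lemma6:
  fixes n :: nat and f :: "qpoly poly" and f1 f3 :: "qpoly poly poly"
  assumes "n \<ge> 3"
    and "f = genpoly n"
    and "(Yv - Xv) * f1 = eval1 f Yv - eval1 f Xv"
    and "(Yv - Xv)^2 * f3 =
           2 * (eval1 f Yv - 2 * eval1 f (smult [:rconst (1/2):] (Xv + Yv)) + eval1 f Xv)"
  shows "resultant (subst2 f1 (Xv - Yv) (Xv + Yv)) (subst2 f3 (Xv - Yv) (Xv + Yv))
           = (det (Mlead n f (n - 2)))^2"
proof -
  let ?p1 = "hasse_poly2 1 f" and ?p3 = "hasse_poly2 2 f"
  have deg_f: "degree f = n" and "f \<noteq> 0"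
    using assms(1,2) degree_genpoly[of n] by auto
  then have deg: "degree ?p1 = (n - 1) div 2" "degree ?p3 = (n - 2) div 2"
    using assms(1) by (simp_all add: degree_hasse_poly2)
  then have size: "degree ?p1 + degree ?p3 = n - 2"
    using assms(1) by presburger
  have "resultant (subst2 f1 (Xv - Yv) (Xv + Yv)) (subst2 f3 (Xv - Yv) (Xv + Yv))
      = (resultant ?p1 ?p3)^2"
    by (simp only: subst2_divided_difference[OF assms(3)] subst2_second_difference[OF assms(4)]
        resultant_pcompose_x2)
  also have "\<dots> = det (hurwitz_mat (n - 2) ?p1 ?p3)^2"
  proof -
    have "degree ?p3 \<le> degree ?p1" "degree ?p1 \<le> degree ?p3 + 1"
      unfolding deg by presburger+
    from det_hurwitz_mat_square[OF this, unfolded size] show ?thesis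
      by (rule sym)
  qed
  also have "hurwitz_mat (n - 2) ?p1 ?p3 = Mlead n f (n - 2)"
    by (simp add: Mlead_eq_hurwitz_mat deg_f)
  finally show ?thesis .
qed

end
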